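(* Let $\lambda$ be a partition with at most $N$ parts, $T$ a column-strict tableau of shape $\lambda$ and $\theta\in\mathsf M^{(N)}$ the matrix attached to $T$. Then $\psi_T(q,t)=c_N(\theta;t^{N-1}q^{\lambda_1},t^{N-2}q^{\lambda_2},\dots,q^{\lambda_N};q,t)$.
   Context: $(p;q)_n=(1-p)\cdots(1-q^{n-1}p)$, $n\in\mathbb N\cup\{\infty\}$. A tableau $T$ of shape $\lambda$ is a sequence $\emptyset=\lambda^{(0)}\subset\lambda^{(1)}\subset\dots\subset\lambda^{(N)}=\lambda$ of partitions with each $\lambda^{(k)}-\lambda^{(k-1)}$ a horizontal strip; its matrix is $\theta_{i,j}=\lambda^{(j)}_i-\lambda^{(j-1)}_i$ ($i<j$), an element of $\mathsf M^{(N)}$ (strictly upper triangular nonnegative integer matrices). With $f(u)=(tu;q)_\infty/(qu;q)_\infty$, $\psi_{\lambda/\mu}=\prod_{1\le i\le j\le\ell(\mu)}\frac{f(q^{\mu_i-\mu_j}t^{j-i})f(q^{\lambda_i-\lambda_{j+1}}t^{j-i})}{f(q^{\lambda_i-\mu_j}t^{j-i})f(q^{\mu_i-\lambda_{j+1}}t^{j-i})}$ and $\psi_T=\prod_{k=1}^N\psi_{\lambda^{(k)}/\lambda^{(k-1)}}$. $c_N$: $c_1=1$, $c_N(\theta;z)=c_{N-1}(\theta';q^{-\theta_{1,N}}z_1,\dots,q^{-\theta_{N-1,N}}z_{N-1})\prod_{1\le i\le j\le N-1}\frac{(tz_{j+1}/z_i;q)_{\theta_{i,N}}}{(qz_{j+1}/z_i;q)_{\theta_{i,N}}}\frac{(q^{1-\theta_{j,N}}z_j/(tz_i);q)_{\theta_{i,N}}}{(q^{-\theta_{j,N}}z_j/z_i;q)_{\theta_{i,N}}}$,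 $\theta'$ the upper-left $(N-1)\times(N-1)$ block. *)

theory Defs
  imports "HOL-Analysis.Analysis"
begin

definition qpoch :: "complex \<Rightarrow> complex \<Rightarrow> nat \<Rightarrow> complex" where
  "qpoch p q n = (\<Prod>k<n. (1 - q ^ k * p))"

definition qpoch_inf :: "complex \<Rightarrow> complex \<Rightarrow> complex" where
  "qpoch_inf p q = (\<Prod>k. (1 - q ^ k * p))"

definition fqt :: "complex \<Rightarrow> complex \<Rightarrow> complex \<Rightarrow> complex" where
  "fqt q t u = qpoch_inf (t * u) q / qpoch_inf (q * u) q"

text \<open>Partitions are represented as functions nat \<Rightarrow> nat, indexed from 1
  (lam i is the i-th part); index 0 is unused and fixed to 0.\<close>

definition is_partition :: "(nat \<Rightarrow> nat) \<Rightarrow> bool" where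
  "is_partition lam \<longleftrightarrow> lam 0 = 0 \<and> (\<forall>i\<ge>1. lam (Suc i) \<le> lam i)
      \<and> (\<exists>n. \<forall>i>n. lam i = 0)"

definition plength :: "(nat \<Rightarrow> nat) \<Rightarrow> nat" where
  "plength mu = card {i. 1 \<le> i \<and> 0 < mu i}"

definition horizontal_strip :: "(nat \<Rightarrow> nat) \<Rightarrow> (nat \<Rightarrow> nat) \<Rightarrow> bool" where
  "horizontal_strip lam mu \<longleftrightarrow> (\<forall>i\<ge>1. lam (Suc i) \<le> mu i \<and> mu i \<le> lam i)"

text \<open>A (column-strict) tableau of shape lam with entries in {1..N}: a sequence
  tab 0 = empty \<subseteq> tab 1 \<subseteq> ... \<subseteq> tab N = lam of partitions with horizontal-strip
  differences.\<close>

definition is_tableau :: "nat \<Rightarrow> (nat \<Rightarrow> nat) \<Rightarrow> (nat \<Rightarrow> nat \<Rightarrow> nat) \<Rightarrow> bool" where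
  "is_tableau N lam tab \<longleftrightarrow> tab 0 = (\<lambda>_. 0) \<and> tab N = lam
     \<and> (\<forall>k\<in>{1..N}. is_partition (tab k) \<and> horizontal_strip (tab k) (tab (k - 1)))"

definition tab_matrix :: "(nat \<Rightarrow> nat \<Rightarrow> nat) \<Rightarrow> nat \<Rightarrow> nat \<Rightarrow> nat" where
  "tab_matrix tab i j = tab j i - tab (j - 1) i"

definition psi_skew :: "complex \<Rightarrow> complex \<Rightarrow> (nat \<Rightarrow> nat) \<Rightarrow> (nat \<Rightarrow> nat) \<Rightarrow> complex" where
  "psi_skew q t lam mu =
    (\<Prod>j\<in>{1..plength mu}. \<Prod>i\<in>{1..j}.
       fqt q t (q powi (int (mu i) - int (mu j)) * t ^ (j - i))
     * fqt q t (q powi (int (lam i) - int (lam (Suc j))) * t ^ (j - i))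
     / (fqt q t (q powi (int (lam i) - int (mu j)) * t ^ (j - i))
     * fqt q t (q powi (int (mu i) - int (lam (Suc j))) * t ^ (j - i))))"

definition psi_tab :: "complex \<Rightarrow> complex \<Rightarrow> nat \<Rightarrow> (nat \<Rightarrow> nat \<Rightarrow> nat) \<Rightarrow> complex" where
  "psi_tab q t N tab = (\<Prod>k\<in>{1..N}. psi_skew q t (tab k) (tab (k - 1)))"

text \<open>The upper-left block theta' is the
  same function (c_n only reads entries with indices \<le> n). c 0 is an unused convention.\<close>

fun cN :: "nat \<Rightarrow> (nat \<Rightarrow> nat \<Rightarrow> nat) \<Rightarrow> (nat \<Rightarrow> complex) \<Rightarrow> complex \<Rightarrow> complex \<Rightarrow> complex" where
  "cN 0 th z q t = 1"
| "cN (Suc n) th z q t =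
    (if n = 0 then 1 else
      cN n th (\<lambda>i. q powi (- int (th i (Suc n))) * z i) q t *
      (\<Prod>j\<in>{1..n}. \<Prod>i\<in>{1..j}.
         qpoch (t * z (Suc j) / z i) q (th i (Suc n))
         / qpoch (q * z (Suc j) / z i) q (th i (Suc n))
         * (qpoch (q powi (1 - int (th j (Suc n))) * z j / (t * z i)) q (th i (Suc n))
         / qpoch (q powi (- int (th j (Suc n))) * z j / z i) q (th i (Suc n)))))"

end

theory Submission
  imports Defs
begin

text \<open>Induction on \<open>N\<close>, peeling off the last horizontal strip \<open>\<lambda>/\<mu>\<close> of the tableau.
  With \<open>z_k = t^(N-k) q^\<lambda>_k\<close>, the shifted variables \<open>q^(-\<theta>_(k,N)) z_k\<close> in the
  recursion for \<open>c_N\<close> are \<open>t \<cdot> t^(N-1-k) q^\<mu>_k\<close>, and \<open>c_(N-1)\<close> is blind to the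
  constant factor \<open>t\<close>; so it remains to match \<open>\<psi>_(\<lambda>/\<mu>)\<close> with the product in the
  recursion, factor by factor. Each factor of \<open>\<psi>_(\<lambda>/\<mu>)\<close> is a cross ratio of four
  values of \<open>f\<close> whose arguments differ by \<open>q^\<theta>\<close>, and
  \<open>f(u) = (tu;q)_m / (qu;q)_m \<cdot> f(q^m u)\<close> collapses it to finite q-Pochhammer symbols;
  the reflection \<open>(x;q)_m = \<Prod>_k (-q^k x) \<cdot> (q^(1-m)/x;q)_m\<close> puts these in the form
  used by \<open>c_N\<close>. The factors with \<open>j > \<ell>(\<mu>)\<close> are 1, and genericity of \<open>q, t\<close>
  makes the values of \<open>f\<close> that cancel nonzero.\<close>

lemma qpoch_inf_convergent_prod:
  fixes p q :: complex assumes "norm q < 1"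
  shows "convergent_prod (\<lambda>k. 1 - q ^ k * p)"
proof -
  have "summable (\<lambda>k. norm p * norm q ^ k)"
    using assms by (intro summable_mult summable_geometric) auto
  then have "summable (\<lambda>k. norm ((1 - q ^ k * p) - 1))"
    by (simp add: norm_mult norm_power mult.commute)
  then show ?thesis
    by (intro abs_convergent_prod_imp_convergent_prod summable_imp_abs_convergent_prod)
qed

lemma qpoch_inf_split:
  fixes p q :: complex assumes "norm q < 1"
  shows "qpoch_inf p q = qpoch p q m * qpoch_inf (q ^ m * p) q"
proof -
  have "(\<lambda>k. 1 - q ^ k * p) has_prod ((\<Prod>k<m. 1 - q ^ k * p) * (\<Prod>k. 1 - q ^ (k + m) * p))"
    using has_prod_ignore_initial_segment'[OF qpoch_inf_convergent_prod[OF assms]] by simp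
  then have "(\<lambda>k. 1 - q ^ k * p) has_prod (qpoch p q m * qpoch_inf (q ^ m * p) q)"
    unfolding qpoch_def qpoch_inf_def by (simp add: power_add mult.assoc)
  moreover have "(\<lambda>k. 1 - q ^ k * p) has_prod qpoch_inf p q"
    unfolding qpoch_inf_def using qpoch_inf_convergent_prod[OF assms] convergent_prod_has_prod by blast
  ultimately show ?thesis using has_prod_unique2 by blast
qed

lemma qpoch_inf_nonzero:
  fixes p q :: complex assumes "norm q < 1" "\<And>k. q ^ k * p \<noteq> 1"
  shows "qpoch_inf p q \<noteq> 0"
  unfolding qpoch_inf_def using assms qpoch_inf_convergent_prod[OF assms(1)]
  by (intro prodinf_nonzero) auto

lemma fqt_shift:
  fixes q t u :: complex assumes "norm q < 1"
  shows "fqt q t u = qpoch (t * u) q m / qpoch (q * u) q m * fqt q t (q ^ m * u)"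
  using qpoch_inf_split[OF assms, of "t * u" m] qpoch_inf_split[OF assms, of "q * u" m]
  by (simp add: fqt_def mult_ac)

lemma qpoch_reflect:
  fixes q x :: complex assumes "q \<noteq> 0" "x \<noteq> 0"
  shows "qpoch x q m = (\<Prod>k<m. - (q ^ k * x)) * qpoch (q powi (1 - int m) / x) q m"
proof -
  have "qpoch (q powi (1 - int m) / x) q m = (\<Prod>k<m. 1 - q ^ (m - Suc k) * (q powi (1 - int m) / x))"
    unfolding qpoch_def by (rule prod.nat_diff_reindex[symmetric])
  also have "\<dots> = (\<Prod>k<m. 1 - inverse (q ^ k * x))"
  proof (rule prod.cong)
    fix k assume "k \<in> {..<m}"
    then have "int (m - Suc k) + (1 - int m) = - int k" by simp
    then have "q ^ (m - Suc k) * q powi (1 - int m) = inverse (q ^ k)"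
      using assms by (metis power_int_add power_int_minus power_int_of_nat)
    then show "1 - q ^ (m - Suc k) * (q powi (1 - int m) / x) = 1 - inverse (q ^ k * x)"
      by (simp add: divide_inverse mult.assoc)
  qed simp
  moreover have "1 - q ^ k * x = - (q ^ k * x) * (1 - inverse (q ^ k * x))" for k
    using assms by (simp add: field_simps)
  ultimately show ?thesis
    by (simp add: qpoch_def prod.distrib[symmetric])
qed

lemma fqt_shift_reflect:
  fixes q t u :: complex assumes q: "norm q < 1" "q \<noteq> 0" and "t \<noteq> 0" "u \<noteq> 0"
  shows "fqt q t (q powi (- int m) * u)
       = (t / q) ^ m * (qpoch (q / (t * u)) q m / qpoch (inverse u) q m) * fqt q t u"
proof -
  define v where "v = q powi (- int m) * u"
  have v: "v \<noteq> 0" "q ^ m * v = u"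
    using assms by (simp_all add: v_def power_int_minus)
  have pm: "q powi (1 - int m) = q * q powi (- int m)"
    using q(2) by (simp add: power_int_diff power_int_minus divide_inverse)
  define Pt where "Pt = (\<Prod>k<m. - (q ^ k * (t * v)))"
  define Pq where "Pq = (\<Prod>k<m. - (q ^ k * (q * v)))"
  have "qpoch (t * v) q m = Pt * qpoch (q / (t * u)) q m"
    using qpoch_reflect[of q "t * v" m] assms v pm by (simp add: Pt_def v_def)
  moreover have "qpoch (q * v) q m = Pq * qpoch (inverse u) q m"
    using qpoch_reflect[of q "q * v" m] assms v pm by (simp add: Pq_def v_def field_simps)
  moreover have "Pt / Pq = (t / q) ^ m"
    using assms v by (simp add: Pt_def Pq_def prod_dividef[symmetric])
  ultimately have "qpoch (t * v) q m / qpoch (q * v) q m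
      = (t / q) ^ m * (qpoch (q / (t * u)) q m / qpoch (inverse u) q m)"
    by (metis times_divide_times_eq)
  with fqt_shift[OF q(1), of t v m] show ?thesis
    unfolding v(2) v_def[symmetric] by simp
qed

lemma fqt_cross_ratio:
  fixes q t x y :: complex
  assumes q: "norm q < 1" "q \<noteq> 0" and t: "t \<noteq> 0" and "x \<noteq> 0" "y \<noteq> 0"
    and "fqt q t x \<noteq> 0" "fqt q t y \<noteq> 0"
  shows "fqt q t (q powi (- int m) * y) * fqt q t x / (fqt q t y * fqt q t (q powi (- int m) * x))
       = qpoch (inverse x) q m / qpoch (q / (t * x)) q m
         * (qpoch (q / (t * y)) q m / qpoch (inverse y) q m)"
proof -
  define Rx where "Rx = qpoch (q / (t * x)) q m / qpoch (inverse x) q m"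
  define Ry where "Ry = qpoch (q / (t * y)) q m / qpoch (inverse y) q m"
  define K where "K = (t / q) ^ m * fqt q t x * fqt q t y"
  have "K \<noteq> 0" using assms by (simp add: K_def)
  have "(t / q) ^ m * Ry * fqt q t y * fqt q t x / (fqt q t y * ((t / q) ^ m * Rx * fqt q t x))
      = (K * Ry) / (K * Rx)"
    by (simp only: K_def mult_ac)
  also have "\<dots> = Ry / Rx" using \<open>K \<noteq> 0\<close> by simp
  finally show ?thesis
    unfolding fqt_shift_reflect[OF q t assms(4)] fqt_shift_reflect[OF q t assms(5)]
      Rx_def[symmetric] Ry_def[symmetric]
    by (simp add: Rx_def Ry_def mult_ac)
qed

lemma fqt_monomial_nonzero:
  fixes q t :: complex
  assumes q: "norm q < 1" "q \<noteq> 0" and t: "t \<noteq> 0"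
    and generic: "\<And>a b :: int. (a, b) \<noteq> (0, 0) \<Longrightarrow> q powi a * t powi b \<noteq> 1"
    and "s = 0 \<Longrightarrow> 0 \<le> e"
  shows "fqt q t (q powi e * t ^ s) \<noteq> 0"
proof -
  have "q ^ k * (t * (q powi e * t ^ s)) \<noteq> 1" for k
  proof -
    have "q ^ k * (t * (q powi e * t ^ s)) = q powi (int k + e) * t powi (int s + 1)"
      using q t by (simp add: power_int_add mult_ac)
    then show ?thesis using generic[of "int k + e" "int s + 1"] by simp
  qed
  moreover have "q ^ k * (q * (q powi e * t ^ s)) \<noteq> 1" for k
  proof -
    have "q ^ k * (q * (q powi e * t ^ s)) = q powi (int k + 1 + e) * t powi int s"
      using q t by (simp add: power_int_add mult_ac)
    moreover have "(int k + 1 + e, int s) \<noteq> (0, 0)"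
      using assms(5) by (cases "s = 0") auto
    ultimately show ?thesis using generic by metis
  qed
  ultimately show ?thesis
    by (simp add: fqt_def qpoch_inf_nonzero[OF q(1)])
qed

definition psi_factor :: "complex \<Rightarrow> complex \<Rightarrow> (nat \<Rightarrow> nat) \<Rightarrow> (nat \<Rightarrow> nat) \<Rightarrow> nat \<Rightarrow> nat \<Rightarrow> complex"
  where "psi_factor q t lam mu i j =
     fqt q t (q powi (int (mu i) - int (mu j)) * t ^ (j - i))
     * fqt q t (q powi (int (lam i) - int (lam (Suc j))) * t ^ (j - i))
     / (fqt q t (q powi (int (lam i) - int (mu j)) * t ^ (j - i))
     * fqt q t (q powi (int (mu i) - int (lam (Suc j))) * t ^ (j - i)))"

lemma psi_skew_eq_prod_psi_factor:
  "psi_skew q t lam mu = (\<Prod>j\<in>{1..plength mu}. \<Prod>i\<in>{1..j}. psi_factor q t lam mu i j)"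
  by (simp add: psi_skew_def psi_factor_def)

definition cN_factor :: "nat \<Rightarrow> (nat \<Rightarrow> nat \<Rightarrow> nat) \<Rightarrow> (nat \<Rightarrow> complex) \<Rightarrow> complex \<Rightarrow> complex \<Rightarrow> nat \<Rightarrow> nat \<Rightarrow> complex"
  where "cN_factor n th z q t i j =
     qpoch (t * z (Suc j) / z i) q (th i (Suc n))
     / qpoch (q * z (Suc j) / z i) q (th i (Suc n))
     * (qpoch (q powi (1 - int (th j (Suc n))) * z j / (t * z i)) q (th i (Suc n))
     / qpoch (q powi (- int (th j (Suc n))) * z j / z i) q (th i (Suc n)))"

lemma cN_Suc:
  "0 < n \<Longrightarrow> cN (Suc n) th z q t =
     cN n th (\<lambda>i. q powi (- int (th i (Suc n))) * z i) q t
     * (\<Prod>j\<in>{1..n}. \<Prod>i\<in>{1..j}. cN_factor n th z q t i j)"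
  by (simp add: cN_factor_def)

lemma cN_cong:
  "(\<And>i. i \<in> {1..n} \<Longrightarrow> z i = z' i) \<Longrightarrow> cN n th z q t = cN n th z' q t"
proof (induction n arbitrary: z z')
  case (Suc n)
  have "cN n th (\<lambda>i. q powi (- int (th i (Suc n))) * z i) q t
      = cN n th (\<lambda>i. q powi (- int (th i (Suc n))) * z' i) q t"
    by (rule Suc.IH) (use Suc.prems in auto)
  then show ?case
    using Suc.prems by (cases n) (auto simp: cN_Suc cN_factor_def intro!: prod.cong)
qed simp

lemma cN_scale:
  assumes "c \<noteq> 0"
  shows "cN n th (\<lambda>i. c * z i) q t = cN n th z q t"
proof (induction n arbitrary: z)
  case (Suc n)
  have "cN n th (\<lambda>i. q powi (- int (th i (Suc n))) * (c * z i)) q t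
      = cN n th (\<lambda>i. q powi (- int (th i (Suc n))) * z i) q t"
    using Suc.IH[of "\<lambda>i. q powi (- int (th i (Suc n))) * z i"] by (simp add: mult_ac)
  then show ?case
    using assms by (cases n) (auto simp: cN_Suc cN_factor_def intro!: prod.cong)
qed simp

lemma is_partition_antimono:
  assumes "is_partition p" "1 \<le> i" "i \<le> j"
  shows "p j \<le> p i"
  using assms(3)
proof (induction j rule: dec_induct)
  case (step n)
  then have "p (Suc n) \<le> p n" using assms(1,2) by (simp add: is_partition_def)
  with step.IH show ?case by simp
qed simp

lemma tableau_entry_zero:
  assumes T: "is_tableau N lam tab"
  shows "k \<le> N \<Longrightarrow> k < i \<Longrightarrow> tab k i = 0"
proof (induction k arbitrary: i)
  case 0
  then show ?case using T by (simp add: is_tableau_def)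
next
  case (Suc k)
  then obtain i' where i: "i = Suc i'" "k < i'" by (cases i) auto
  have "Suc k \<in> {1..N}" using Suc.prems by simp
  then have "horizontal_strip (tab (Suc k)) (tab (Suc k - 1))"
    using T unfolding is_tableau_def by blast
  then have "tab (Suc k) (Suc i') \<le> tab k i'" using i by (auto simp: horizontal_strip_def)
  then show ?case using Suc.IH[of i'] Suc.prems i by simp
qed

lemma plength_le:
  assumes "\<And>i. n < i \<Longrightarrow> mu i = 0"
  shows "plength mu \<le> n"
proof -
  have "{i. 1 \<le> i \<and> 0 < mu i} \<subseteq> {1..n}"
    using assms by (auto simp: not_less[symmetric])
  then show ?thesis unfolding plength_def using card_mono[of "{1..n}"] by fastforce
qed

lemma le_plength:
  assumes "is_partition mu" "1 \<le> j" "0 < mu j"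
  shows "j \<le> plength mu"
proof -
  obtain n where n: "\<forall>i>n. mu i = 0" using assms(1) by (auto simp: is_partition_def)
  have "{1..j} \<subseteq> {i. 1 \<le> i \<and> 0 < mu i}"
    using is_partition_antimono[OF assms(1)] assms(3) by fastforce
  moreover have "{i. 1 \<le> i \<and> 0 < mu i} \<subseteq> {..n}"
    using n by (auto simp: not_less[symmetric])
  ultimately show ?thesis
    unfolding plength_def using card_mono finite_subset by (metis card_atLeastAtMost diff_Suc_1 finite_atMost)
qed

lemma psi_factor_eq_one:
  assumes q: "norm q < 1" "q \<noteq> 0" and t: "t \<noteq> 0"
    and generic: "\<And>a b :: int. (a, b) \<noteq> (0, 0) \<Longrightarrow> q powi a * t powi b \<noteq> 1"
    and "mu j = 0" "lam (Suc j) = 0"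
  shows "psi_factor q t lam mu i j = 1"
proof -
  have "fqt q t (q powi int k * t ^ (j - i)) \<noteq> 0" for k
    by (rule fqt_monomial_nonzero[OF q t generic]) auto
  then show ?thesis using assms(5,6) by (simp add: psi_factor_def)
qed

lemma psi_factor_eq_cross_ratio:
  fixes q t :: complex
  assumes q: "norm q < 1" "q \<noteq> 0" and t: "t \<noteq> 0"
    and generic: "\<And>a b :: int. (a, b) \<noteq> (0, 0) \<Longrightarrow> q powi a * t powi b \<noteq> 1"
    and ij: "i \<le> j" and mu_i: "mu i \<le> lam i" and mu_j: "mu j \<le> lam j"
    and lam_ij: "lam (Suc j) \<le> lam i"
    and X: "X = q powi (int (lam i) - int (lam (Suc j))) * t ^ (j - i)"
    and Y: "Y = q powi (int (lam i) - int (mu j)) * t ^ (j - i)"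
    and m: "m = lam i - mu i"
  shows "psi_factor q t lam mu i j
    = qpoch (inverse X) q m / qpoch (q / (t * X)) q m * (qpoch (q / (t * Y)) q m / qpoch (inverse Y) q m)"
proof -
  have "X \<noteq> 0" "Y \<noteq> 0" using q t by (simp_all add: X Y)
  have "fqt q t X \<noteq> 0" unfolding X
    by (rule fqt_monomial_nonzero[OF q t generic]) (use lam_ij in auto)
  moreover have "fqt q t Y \<noteq> 0" unfolding Y
    by (rule fqt_monomial_nonzero[OF q t generic]) (use mu_j ij in auto)
  moreover have
    "q powi (int (mu i) - int (lam (Suc j))) * t ^ (j - i) = q powi (- int m) * X"
    "q powi (int (mu i) - int (mu j)) * t ^ (j - i) = q powi (- int m) * Y"
    using q(2) mu_i by (simp_all add: X Y m of_nat_diff power_int_add[symmetric] mult.assoc)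
  ultimately show ?thesis
    using fqt_cross_ratio[OF q t \<open>X \<noteq> 0\<close> \<open>Y \<noteq> 0\<close>]
    unfolding psi_factor_def X[symmetric] Y[symmetric] by simp
qed

lemma cN_factor_eq_cross_ratio:
  fixes q t :: complex
  assumes "q \<noteq> 0" "t \<noteq> 0" "\<And>k. z k \<noteq> 0"
    and zX: "z i = t * X * z (Suc j)" and zY: "z i = q powi (- int (th j (Suc n))) * Y * z j"
    and m: "m = th i (Suc n)"
  shows "cN_factor n th z q t i j
    = qpoch (inverse X) q m / qpoch (q / (t * X)) q m * (qpoch (q / (t * Y)) q m / qpoch (inverse Y) q m)"
proof -
  have "t * z (Suc j) / z i = inverse X" "q * z (Suc j) / z i = q / (t * X)"
    using assms(2,3) unfolding zX by (simp_all add: field_simps)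
  moreover have "q powi (1 - int (th j (Suc n))) * z j / (t * z i) = q / (t * Y)"
    "q powi (- int (th j (Suc n))) * z j / z i = inverse Y"
    using assms(1-3) unfolding zY by (simp_all add: power_int_diff power_int_minus field_simps)
  ultimately show ?thesis by (simp add: cN_factor_def m)
qed

text \<open>In terms of \<open>z_k = t^(n+1-k) q^\<lambda>_k\<close>, the arguments \<open>X\<close> and \<open>Y\<close> of the cross ratio
  are \<open>z_i / (t z_(j+1))\<close> and \<open>q^\<theta>_j z_i / z_j\<close>.\<close>

lemma psi_factor_eq_cN_factor:
  fixes q t :: complex
  assumes q: "norm q < 1" "q \<noteq> 0" and t: "t \<noteq> 0"
    and generic: "\<And>a b :: int. (a, b) \<noteq> (0, 0) \<Longrightarrow> q powi a * t powi b \<noteq> 1"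
    and ij: "i \<le> j" "j \<le> n"
    and mu_i: "mu i \<le> lam i" and mu_j: "mu j \<le> lam j" and lam_ij: "lam (Suc j) \<le> lam i"
    and th_i: "th i (Suc n) = lam i - mu i" and th_j: "th j (Suc n) = lam j - mu j"
  shows "psi_factor q t lam mu i j = cN_factor n th (\<lambda>k. t ^ (Suc n - k) * q ^ lam k) q t i j"
proof -
  define z where "z k = t ^ (Suc n - k) * q ^ lam k" for k
  define s where "s = j - i"
  define X where "X = q powi (int (lam i) - int (lam (Suc j))) * t ^ s"
  define Y where "Y = q powi (int (lam i) - int (mu j)) * t ^ s"
  have "z i = t * X * z (Suc j)"
  proof -
    have "Suc n - i = Suc (s + (Suc n - Suc j))" using ij by (simp add: s_def)
    then have "t ^ (Suc n - i) = t * t ^ s * t ^ (Suc n - Suc j)" by (simp add: power_add)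
    moreover have "q ^ lam i = q powi (int (lam i) - int (lam (Suc j))) * q ^ lam (Suc j)"
      using q(2) by (simp add: power_int_diff)
    ultimately show ?thesis by (simp add: z_def X_def mult_ac)
  qed
  moreover have "z i = q powi (- int (th j (Suc n))) * Y * z j"
  proof -
    have "Suc n - i = s + (Suc n - j)" using ij by (simp add: s_def)
    then have "t ^ (Suc n - i) = t ^ s * t ^ (Suc n - j)" by (simp add: power_add)
    moreover have "q powi (- int (th j (Suc n))) * q powi (int (lam i) - int (mu j))
        = q powi (int (lam i) - int (lam j))"
      using q(2) mu_j by (simp add: th_j of_nat_diff power_int_add[symmetric])
    moreover have "q ^ lam i = q powi (int (lam i) - int (lam j)) * q ^ lam j"
      using q(2) by (simp add: power_int_diff)
    ultimately show ?thesis by (simp add: z_def Y_def mult_ac)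
  qed
  moreover have "z k \<noteq> 0" for k using q t by (simp add: z_def)
  ultimately show ?thesis
    unfolding z_def[symmetric]
    using psi_factor_eq_cross_ratio[OF q t generic ij(1) mu_i mu_j lam_ij X_def[unfolded s_def]
        Y_def[unfolded s_def] th_i]
      cN_factor_eq_cross_ratio[OF q(2) t, of z i X j th n Y]
    by simp
qed

lemma psi_skew_eq_prod_cN_factor:
  fixes q t :: complex
  assumes q: "norm q < 1" "q \<noteq> 0" and t: "t \<noteq> 0"
    and generic: "\<And>a b :: int. (a, b) \<noteq> (0, 0) \<Longrightarrow> q powi a * t powi b \<noteq> 1"
    and lam: "is_partition lam" and mu: "is_partition mu" and strip: "horizontal_strip lam mu"
    and mu_vanish: "\<And>i. n < i \<Longrightarrow> mu i = 0"
    and th: "\<And>i. i \<in> {1..n} \<Longrightarrow> th i (Suc n) = lam i - mu i"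
  shows "psi_skew q t lam mu =
    (\<Prod>j\<in>{1..n}. \<Prod>i\<in>{1..j}. cN_factor n th (\<lambda>k. t ^ (Suc n - k) * q ^ lam k) q t i j)"
proof -
  have interlace: "lam (Suc i) \<le> mu i" "mu i \<le> lam i" if "1 \<le> i" for i
    using strip that by (auto simp: horizontal_strip_def)
  have "psi_skew q t lam mu = (\<Prod>j\<in>{1..plength mu}. \<Prod>i\<in>{1..j}. psi_factor q t lam mu i j)"
    by (rule psi_skew_eq_prod_psi_factor)
  also have "\<dots> = (\<Prod>j\<in>{1..n}. \<Prod>i\<in>{1..j}. psi_factor q t lam mu i j)"
  proof (rule prod.mono_neutral_left)
    show "{1..plength mu} \<subseteq> {1..n}" using plength_le[OF mu_vanish] by auto
    show "\<forall>j\<in>{1..n} - {1..plength mu}. (\<Prod>i\<in>{1..j}. psi_factor q t lam mu i j) = 1"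
    proof
      fix j assume j: "j \<in> {1..n} - {1..plength mu}"
      then have "mu j = 0" using le_plength[OF mu, of j] by fastforce
      moreover have "lam (Suc j) = 0" using interlace(1)[of j] j \<open>mu j = 0\<close> by simp
      ultimately show "(\<Prod>i\<in>{1..j}. psi_factor q t lam mu i j) = 1"
        by (intro prod.neutral ballI psi_factor_eq_one[OF q t generic])
    qed
  qed simp
  also have "\<dots> = (\<Prod>j\<in>{1..n}. \<Prod>i\<in>{1..j}. cN_factor n th (\<lambda>k. t ^ (Suc n - k) * q ^ lam k) q t i j)"
  proof (intro prod.cong refl)
    fix j i assume j: "j \<in> {1..n}" and i: "i \<in> {1..j}"
    have "lam (Suc j) \<le> lam i"
      using interlace[of j] is_partition_antimono[OF lam, of i j] i j by simp
    then show "psi_factor q t lam mu i j = cN_factor n th (\<lambda>k. t ^ (Suc n - k) * q ^ lam k) q t i j"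
      using i j interlace th by (intro psi_factor_eq_cN_factor[OF q t generic]) auto
  qed
  finally show ?thesis .
qed

lemma psi_tab_eq_cN:
  fixes q t :: complex
  assumes q: "norm q < 1" "q \<noteq> 0" and t: "t \<noteq> 0"
    and generic: "\<And>a b :: int. (a, b) \<noteq> (0, 0) \<Longrightarrow> q powi a * t powi b \<noteq> 1"
  shows "1 \<le> N \<Longrightarrow> is_tableau N (tab N) tab \<Longrightarrow>
    psi_tab q t N tab = cN N (tab_matrix tab) (\<lambda>i. t ^ (N - i) * q ^ tab N i) q t"
proof (induction N rule: nat_induct_at_least)
  case base
  then have "tab 0 = (\<lambda>_. 0)" by (simp add: is_tableau_def)
  then show ?case by (simp add: psi_tab_def psi_skew_def plength_def)
next
  case (Suc n)
  have strips: "is_partition (tab k) \<and> horizontal_strip (tab k) (tab (k - 1))" if "k \<in> {1..Suc n}" for k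
    using Suc.prems that by (auto simp: is_tableau_def)
  have "is_tableau n (tab n) tab" using Suc.prems by (auto simp: is_tableau_def)
  then have IH: "psi_tab q t n tab = cN n (tab_matrix tab) (\<lambda>i. t ^ (n - i) * q ^ tab n i) q t"
    by (rule Suc.IH)
  have "cN n (tab_matrix tab)
      (\<lambda>i. q powi (- int (tab_matrix tab i (Suc n))) * (t ^ (Suc n - i) * q ^ tab (Suc n) i)) q t
    = cN n (tab_matrix tab) (\<lambda>i. t * (t ^ (n - i) * q ^ tab n i)) q t"
  proof (rule cN_cong)
    fix i assume i: "i \<in> {1..n}"
    then have "tab n i \<le> tab (Suc n) i" using strips[of "Suc n"] by (simp add: horizontal_strip_def)
    then have "q powi (- int (tab_matrix tab i (Suc n))) * q ^ tab (Suc n) i = q ^ tab n i"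
      using q(2) by (simp add: tab_matrix_def of_nat_diff power_int_diff power_int_minus)
    moreover have "t ^ (Suc n - i) = t * t ^ (n - i)" using i by (simp add: Suc_diff_le)
    ultimately show "q powi (- int (tab_matrix tab i (Suc n))) * (t ^ (Suc n - i) * q ^ tab (Suc n) i)
        = t * (t ^ (n - i) * q ^ tab n i)" by (simp add: mult_ac)
  qed
  moreover have "psi_skew q t (tab (Suc n)) (tab n) =
      (\<Prod>j\<in>{1..n}. \<Prod>i\<in>{1..j}.
        cN_factor n (tab_matrix tab) (\<lambda>k. t ^ (Suc n - k) * q ^ tab (Suc n) k) q t i j)"
    using strips[of "Suc n"] strips[of n] Suc.hyps tableau_entry_zero[OF Suc.prems]
    by (intro psi_skew_eq_prod_cN_factor[OF q t generic]) (auto simp: tab_matrix_def)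
  moreover have "psi_tab q t (Suc n) tab = psi_tab q t n tab * psi_skew q t (tab (Suc n)) (tab n)"
    by (simp add: psi_tab_def prod.cl_ivl_Suc)
  ultimately show ?case
    using Suc.hyps by (simp del: cN.simps add: cN_Suc cN_scale[OF t] IH)
qed

theorem lemma3p1:
  fixes q t :: complex and N :: nat and lam :: "nat \<Rightarrow> nat" and tab :: "nat \<Rightarrow> nat \<Rightarrow> nat"
  assumes q_small: "0 < norm q" "norm q < 1"
    and t_nz: "t \<noteq> 0"
    and generic: "\<And>a b :: int. (a, b) \<noteq> (0, 0) \<Longrightarrow> q powi a * t powi b \<noteq> 1"
    and N_pos: "1 \<le> N"
    and lam_part: "is_partition lam"
    and lam_len: "\<forall>i>N. lam i = 0"
    and T: "is_tableau N lam tab"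
  shows "psi_tab q t N tab =
         cN N (tab_matrix tab) (\<lambda>i. t ^ (N - i) * q ^ (lam i)) q t"
proof -
  have "q \<noteq> 0" using q_small(1) by auto
  moreover have "tab N = lam" using T by (simp add: is_tableau_def)
  ultimately show ?thesis
    using psi_tab_eq_cN[OF q_small(2) _ t_nz generic N_pos] T by simp
qed

end
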